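(* Let $G=(V,E)$ be a finite simple undirected graph of bounded growth with maximum degree $\Delta$ and neighborhood independence bounded by a constant $c$, and let $R$ be an integer with $1\le R<\Delta$. Run the procedure Extended-VM on $G$ with parameter $R$. Then each vertex $v\in V$ can select at least $\deg(v)-O(\Delta c/R)$ neighbors that are not active when $v$ is active, i.e. $v$ has at least $\deg(v)-O(\Delta c/R)$ neighbors outside its own super-class.
   Context: The neighborhood independence of $G$ is the maximum over $v$ of the size of an independent set contained in the neighbor set $\Gamma(v)$; $\deg(v)=|\Gamma(v)|$. $G$ has bounded growth if for every $r$ the number of pairwise independent vertices within distance $r$ of any vertex is bounded by a function of $r$ alone. Procedure Extended-VM$(G,R)$: compute a proper $(\Delta+1)$-coloring of $G$; partition the colors into $R$ super-classes, each consisting of $O(\Delta/R)$ colors (each vertex belongs to the super-class of its color); then perform $R$ phases in round-robin order, one per super-class $S$; in the phase of $S$, the vertices of $S$ are active, and each active vertex $v$ selects all its neighbors not in $S$, divides its backup data equally among them, and sends the parts to them. *)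

theory Defs
  imports Main "HOL-Library.Extended_Nat" Complex_Main
begin

definition simple_graph :: "'a set \<Rightarrow> ('a \<Rightarrow> 'a \<Rightarrow> bool) \<Rightarrow> bool" where
  "simple_graph V E \<longleftrightarrow> finite V \<and> (\<forall>u v. E u v \<longrightarrow> E v u) \<and> (\<forall>v. \<not> E v v)
     \<and> (\<forall>u v. E u v \<longrightarrow> u \<in> V \<and> v \<in> V)"

definition nbhd :: "'a set \<Rightarrow> ('a \<Rightarrow> 'a \<Rightarrow> bool) \<Rightarrow> 'a \<Rightarrow> 'a set" where
  "nbhd V E v = {u \<in> V. E v u}"

definition degree :: "'a set \<Rightarrow> ('a \<Rightarrow> 'a \<Rightarrow> bool) \<Rightarrow> 'a \<Rightarrow> nat" where
  "degree V E v = card (nbhd V E v)"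

definition max_degree :: "'a set \<Rightarrow> ('a \<Rightarrow> 'a \<Rightarrow> bool) \<Rightarrow> nat" where
  "max_degree V E = Max (insert 0 (degree V E ` V))"

definition independent :: "'a set \<Rightarrow> ('a \<Rightarrow> 'a \<Rightarrow> bool) \<Rightarrow> 'a set \<Rightarrow> bool" where
  "independent V E S \<longleftrightarrow> S \<subseteq> V \<and> (\<forall>x\<in>S. \<forall>y\<in>S. \<not> E x y)"

definition nbhd_indep_le :: "'a set \<Rightarrow> ('a \<Rightarrow> 'a \<Rightarrow> bool) \<Rightarrow> nat \<Rightarrow> bool" where
  "nbhd_indep_le V E c \<longleftrightarrow>
     (\<forall>v\<in>V. \<forall>S. S \<subseteq> nbhd V E v \<and> independent V E S \<longrightarrow> card S \<le> c)"

definition within_dist :: "('a \<Rightarrow> 'a \<Rightarrow> bool) \<Rightarrow> nat \<Rightarrow> 'a \<Rightarrow> 'a \<Rightarrow> bool" where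
  "within_dist E r u w \<longleftrightarrow> (\<exists>k\<le>r. (E ^^ k) u w)"

definition bounded_growth :: "'a set \<Rightarrow> ('a \<Rightarrow> 'a \<Rightarrow> bool) \<Rightarrow> (nat \<Rightarrow> nat) \<Rightarrow> bool" where
  "bounded_growth V E f \<longleftrightarrow>
     (\<forall>v\<in>V. \<forall>r S. independent V E S \<and> (\<forall>u\<in>S. within_dist E r v u) \<longrightarrow> card S \<le> f r)"

definition proper_coloring :: "'a set \<Rightarrow> ('a \<Rightarrow> 'a \<Rightarrow> bool) \<Rightarrow> ('a \<Rightarrow> nat) \<Rightarrow> bool" where
  "proper_coloring V E col \<longleftrightarrow> (\<forall>v\<in>V. col v \<le> max_degree V E)
     \<and> (\<forall>u v. E u v \<longrightarrow> col u \<noteq> col v)"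

definition superclass_partition :: "nat \<Rightarrow> nat \<Rightarrow> real \<Rightarrow> (nat \<Rightarrow> nat) \<Rightarrow> bool" where
  "superclass_partition D R K sc \<longleftrightarrow> sc ` {0..D} = {0..<R}
     \<and> (\<forall>j<R. real (card {k \<in> {0..D}. sc k = j}) \<le> K * real D / real R)"

text \<open>Neighbors of v not active in v's phase: those outside v's super-class.\<close>
definition inactive_nbrs :: "'a set \<Rightarrow> ('a \<Rightarrow> 'a \<Rightarrow> bool) \<Rightarrow> ('a \<Rightarrow> nat) \<Rightarrow> (nat \<Rightarrow> nat) \<Rightarrow> 'a \<Rightarrow> 'a set" where
  "inactive_nbrs V E col sc v = {u \<in> nbhd V E v. sc (col u) \<noteq> sc (col v)}"

end

theory Submission
  imports Defs
begin

text \<open>A colour class inside \<open>\<Gamma>(v)\<close> is independent, so it has at most \<open>c\<close> vertices.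
The super-class of \<open>v\<close> consists of at most \<open>K\<Delta>/R\<close> colours, hence at most \<open>K\<Delta>c/R\<close>
neighbours of \<open>v\<close> share it; all other neighbours are inactive in the phase of \<open>v\<close>.\<close>

lemma card_nbhd_color_class_le:
  assumes "nbhd_indep_le V E c" and "v \<in> V"
    and "\<And>u w. E u w \<Longrightarrow> col u \<noteq> col w"
  shows "card {u \<in> nbhd V E v. col u = k} \<le> c"
proof -
  have "independent V E {u \<in> nbhd V E v. col u = k}"
    using assms(3) unfolding independent_def nbhd_def by force
  then show ?thesis
    using assms(1,2) by (auto simp: nbhd_indep_le_def)
qed

lemma card_nbhd_colors_in_le:
  assumes "finite A" and "nbhd_indep_le V E c" and "v \<in> V"
    and "\<And>u w. E u w \<Longrightarrow> col u \<noteq> col w"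
  shows "card {u \<in> nbhd V E v. col u \<in> A} \<le> card A * c"
proof -
  have "{u \<in> nbhd V E v. col u \<in> A} = (\<Union>k\<in>A. {u \<in> nbhd V E v. col u = k})"
    by blast
  also have "card \<dots> \<le> (\<Sum>k\<in>A. card {u \<in> nbhd V E v. col u = k})"
    using assms(1) by (rule card_UN_le)
  also have "\<dots> \<le> (\<Sum>k\<in>A. c)"
    using card_nbhd_color_class_le[OF assms(2-4)] by (rule sum_mono)
  finally show ?thesis by simp
qed

lemma degree_eq_card_same_superclass_plus_inactive:
  assumes "finite V"
  shows "degree V E v = card {u \<in> nbhd V E v. sc (col u) = sc (col v)}
                         + card (inactive_nbrs V E col sc v)"
proof -
  have "finite (nbhd V E v)" using assms by (simp add: nbhd_def)
  then show ?thesis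
    unfolding degree_def inactive_nbrs_def
    by (subst card_Un_disjoint[symmetric]) (auto intro: arg_cong[where f = card])
qed

lemma card_same_superclass_nbrs_le:
  assumes "nbhd_indep_le V E c" and "v \<in> V"
    and "proper_coloring V E col"
    and "superclass_partition (max_degree V E) R K sc"
  shows "real (card {u \<in> nbhd V E v. sc (col u) = sc (col v)})
           \<le> K * real (max_degree V E) * real c / real R"
proof -
  let ?D = "max_degree V E"
  let ?A = "{k \<in> {0..?D}. sc k = sc (col v)}"
  have colors: "\<And>u. u \<in> V \<Longrightarrow> col u \<le> ?D" and proper: "\<And>u w. E u w \<Longrightarrow> col u \<noteq> col w"
    using assms(3) by (auto simp: proper_coloring_def)
  have "{u \<in> nbhd V E v. sc (col u) = sc (col v)} = {u \<in> nbhd V E v. col u \<in> ?A}"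
    using colors by (auto simp: nbhd_def)
  then have "card {u \<in> nbhd V E v. sc (col u) = sc (col v)} \<le> card ?A * c"
    using card_nbhd_colors_in_le[of ?A V E c v col] assms(1,2) proper by simp
  then have "real (card {u \<in> nbhd V E v. sc (col u) = sc (col v)}) \<le> real (card ?A) * real c"
    by (simp only: of_nat_mult[symmetric] of_nat_le_iff)
  also have "\<dots> \<le> K * real ?D / real R * real c"
  proof (rule mult_right_mono)
    have "sc (col v) < R"
      using assms(4) colors[OF assms(2)] by (auto simp: superclass_partition_def)
    then show "real (card ?A) \<le> K * real ?D / real R"
      using assms(4) by (simp add: superclass_partition_def)
  qed simp
  finally show ?thesis by simp
qed

lemma card_inactive_nbrs_ge:
  assumes "simple_graph V E" and "nbhd_indep_le V E c"
    and "proper_coloring V E col"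
    and "superclass_partition (max_degree V E) R K sc"
    and "v \<in> V"
  shows "real (card (inactive_nbrs V E col sc v))
           \<ge> real (degree V E v) - K * real (max_degree V E) * real c / real R"
  using degree_eq_card_same_superclass_plus_inactive[of V E v sc col]
    card_same_superclass_nbrs_le[OF assms(2,5,3,4)] assms(1)
  by (simp add: simple_graph_def)

theorem lemma4:
  "\<forall>K::real. K > 0 \<longrightarrow> (\<exists>C::real. \<forall>(V::nat set) E f c R col sc.
     simple_graph V E \<and> bounded_growth V E f \<and> nbhd_indep_le V E c
     \<and> 1 \<le> R \<and> R < max_degree V E
     \<and> proper_coloring V E col
     \<and> superclass_partition (max_degree V E) R K sc
     \<longrightarrow> (\<forall>v\<in>V. real (card (inactive_nbrs V E col sc v))
            \<ge> real (degree V E v) - C * real (max_degree V E) * real c / real R))"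
  by (intro allI impI exI ballI, elim conjE) (rule card_inactive_nbrs_ge)

end
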